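(* Let $\Omega\subset\mathbb R^n$ be a bounded open set with $C^2$ boundary, let $x\in\partial\Omega$ with outward unit normal $\nu(x)$, and let $u:\overline\Omega\to\mathbb R$ be Lipschitz continuous and semiconcave with modulus $\omega$. Then $$-\partial^+_{-\nu}u(x)=\lambda_+(x):=\max\{\lambda_p(x):p\in D^+u(x)\},\quad\text{where }\lambda_p(x):=\max\{\lambda\in\mathbb R:p^\tau+\lambda\nu(x)\in D^+u(x)\}\ \ (p\in D^+u(x)).$$
   Context: A modulus is a nondecreasing upper semicontinuous $\omega:\mathbb R_+\to\mathbb R_+$ with $\omega(r)\to0$ as $r\to0^+$; $u$ is semiconcave with modulus $\omega$ on $\overline\Omega$ if $\lambda u(x)+(1-\lambda)u(y)-u(\lambda x+(1-\lambda)y)\le\lambda(1-\lambda)|x-y|\omega(|x-y|)$ whenever $[x,y]\subset\overline\Omega$, $\lambda\in[0,1]$. $D^+u(x)=\{p:\limsup_{y\to x,\,y\in\overline\Omega}\frac{u(y)-u(x)-\langle p,y-x\rangle}{|y-x|}\le0\}$. For $p\in\mathbb R^n$, $p^\tau=p-\langle p,\nu(x)\rangle\nu(x)$ is its tangential component. The one-sided derivative in direction $\theta$ is $\partial^+_\theta u(x)=\lim\frac{u(x+h\theta')-u(x)}{h}$ as $h\to0^+$, $\theta'\to\theta$, $x+h\theta'\in\overline\Omega$; here $\theta=-\nu(x)$. *)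

theory Defs
  imports "HOL-Analysis.Analysis"
begin

definition local_C2_defining_fn ::
    "'a::euclidean_space set \<Rightarrow> 'a \<Rightarrow> 'a set \<Rightarrow> ('a \<Rightarrow> real) \<Rightarrow> ('a \<Rightarrow> 'a) \<Rightarrow> bool" where
  "local_C2_defining_fn \<Omega> z U \<rho> g \<longleftrightarrow>
     open U \<and> z \<in> U \<and>
     (\<forall>y\<in>U. (\<rho> has_derivative (\<lambda>h. g y \<bullet> h)) (at y)) \<and>
     (\<exists>G :: 'a \<Rightarrow> ('a \<Rightarrow>\<^sub>L 'a).
        (\<forall>y\<in>U. (g has_derivative blinfun_apply (G y)) (at y)) \<and> continuous_on U G) \<and>
     (\<forall>y\<in>U. g y \<noteq> 0) \<and>
     \<Omega> \<inter> U = {y\<in>U. \<rho> y < 0}"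

definition C2_boundary :: "'a::euclidean_space set \<Rightarrow> bool" where
  "C2_boundary \<Omega> \<longleftrightarrow>
     (\<forall>z\<in>frontier \<Omega>. \<exists>U \<rho> g. local_C2_defining_fn \<Omega> z U \<rho> g)"

definition outward_unit_normal :: "'a::euclidean_space set \<Rightarrow> 'a \<Rightarrow> 'a \<Rightarrow> bool" where
  "outward_unit_normal \<Omega> x \<nu> \<longleftrightarrow>
     (\<exists>U \<rho> g. local_C2_defining_fn \<Omega> x U \<rho> g \<and> \<nu> = (1 / norm (g x)) *\<^sub>R g x)"

definition modulus :: "(real \<Rightarrow> real) \<Rightarrow> bool" where
  "modulus \<omega> \<longleftrightarrow>
     (\<forall>r\<ge>0. \<omega> r \<ge> 0) \<and>
     (\<forall>r s. 0 \<le> r \<longrightarrow> r \<le> s \<longrightarrow> \<omega> r \<le> \<omega> s) \<and>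
     (\<forall>r\<ge>0. \<forall>e>0. \<exists>d>0. \<forall>s\<ge>0. \<bar>s - r\<bar> < d \<longrightarrow> \<omega> s < \<omega> r + e) \<and>
     (\<omega> \<longlongrightarrow> 0) (at_right 0)"

definition semiconcave_with_modulus ::
    "('a::euclidean_space \<Rightarrow> real) \<Rightarrow> (real \<Rightarrow> real) \<Rightarrow> 'a set \<Rightarrow> bool" where
  "semiconcave_with_modulus u \<omega> S \<longleftrightarrow>
     (\<forall>x y l. closed_segment x y \<subseteq> S \<longrightarrow> 0 \<le> l \<longrightarrow> l \<le> 1 \<longrightarrow>
        l * u x + (1 - l) * u y - u (l *\<^sub>R x + (1 - l) *\<^sub>R y)
          \<le> l * (1 - l) * norm (x - y) * \<omega> (norm (x - y)))"

text \<open>Superdifferential relative to S: limsup_{y\<rightarrow>x, y\<in>S} of the quotient is \<le> 0 (unfolded).\<close>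
definition superdiff :: "('a::euclidean_space \<Rightarrow> real) \<Rightarrow> 'a set \<Rightarrow> 'a \<Rightarrow> 'a set" where
  "superdiff u S x = {p. \<forall>e>0. \<exists>d>0. \<forall>y\<in>S. 0 < norm (y - x) \<longrightarrow> norm (y - x) < d \<longrightarrow>
        u y - u x - p \<bullet> (y - x) \<le> e * norm (y - x)}"

definition tangential :: "'a::euclidean_space \<Rightarrow> 'a \<Rightarrow> 'a" where
  "tangential \<nu> p = p - (p \<bullet> \<nu>) *\<^sub>R \<nu>"

definition is_max :: "real set \<Rightarrow> real \<Rightarrow> bool" where
  "is_max A m \<longleftrightarrow> m \<in> A \<and> (\<forall>a\<in>A. a \<le> m)"

definition one_sided_deriv :: "('a::euclidean_space \<Rightarrow> real) \<Rightarrow> 'a set \<Rightarrow> 'a \<Rightarrow> 'a \<Rightarrow> real \<Rightarrow> bool" where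
  "one_sided_deriv u S x \<theta> L \<longleftrightarrow>
     ((\<lambda>(h, \<theta>'). (u (x + h *\<^sub>R \<theta>') - u x) / h) \<longlongrightarrow> L)
       (at (0, \<theta>) within {(h, \<theta>'). 0 < h \<and> x + h *\<^sub>R \<theta>' \<in> S})"

end

theory Submission
  imports Defs
begin

(* For an inward direction w (nu . w < 0) the difference quotients (u (x + h w) - u x) / h are bounded,
   since u is Lipschitz, and by semiconcavity nonincreasing in h up to the error |w| omega (h |w|).
   Hence they converge as h -> 0+ to a directional derivative d w, which is concave and positively
   homogeneous on the open half-space of inward directions, and d w <= p . w for every p in D^+u(x).
   Conversely, a hyperplane supporting the hypograph of d at -nu gives a linear majorant p of d that is
   exact at -nu, and any linear majorant lies in D^+u(x): the boundary is flat to first order, so for y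
   in the closure near x the direction of y - x becomes inward after a normal shift of size
   delta |y - x|, which costs only L delta |y - x|. Therefore max {q . nu | q in D^+u(x)} = - d (- nu),
   and this maximum is lambda_+(x) because p^tau + lambda nu ranges over D^+u(x). *)

section \<open>Almost monotone functions and moduli\<close>

lemma almost_antimono_tendsto_at_right:
  fixes f c :: "real \<Rightarrow> real" and \<sigma> :: "nat \<Rightarrow> real"
  assumes almost_antimono: "\<And>s t. 0 < s \<Longrightarrow> s < t \<Longrightarrow> t < T \<Longrightarrow> f t \<le> f s + c t"
    and "(c \<longlongrightarrow> 0) (at_right 0)"
    and \<sigma>: "\<And>n. 0 < \<sigma> n" "\<And>n. \<sigma> n < T" "\<sigma> \<longlonglongrightarrow> 0" and lim: "(\<lambda>n. f (\<sigma> n)) \<longlonglongrightarrow> a"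
  shows "(f \<longlongrightarrow> a) (at_right 0)"
proof -
  have "\<forall>\<^sub>F s in at_right 0. \<bar>f s - a\<bar> < e" if "0 < e" for e
  proof -
    obtain \<delta> where "0 < \<delta>" and \<delta>: "\<And>t. 0 < t \<Longrightarrow> t < \<delta> \<Longrightarrow> \<bar>c t\<bar> < e / 2"
      using order_tendstoD[OF tendsto_norm[OF assms(2)], of "e / 2"] \<open>0 < e\<close>
      by (auto simp: eventually_at_right_field)
    have "\<forall>\<^sub>F n in sequentially. \<bar>f (\<sigma> n) - a\<bar> < e / 2"
      using lim \<open>0 < e\<close> unfolding tendsto_iff dist_real_def by (meson half_gt_zero)
    moreover have "\<forall>\<^sub>F n in sequentially. \<sigma> n < \<delta>"
      using order_tendstoD(2)[OF \<sigma>(3) \<open>0 < \<delta>\<close>] .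
    ultimately obtain N where N: "\<bar>f (\<sigma> N) - a\<bar> < e / 2" "\<sigma> N < \<delta>"
      by (auto dest: eventually_happens'[OF sequentially_bot eventually_conj])
    have "a - e < f s \<and> f s < a + e" if s: "0 < s" "s < \<sigma> N" for s
    proof
      show "a - e < f s"
        using almost_antimono[OF s \<sigma>(2)] \<delta>[OF \<sigma>(1) N(2)] N(1) by linarith
      have "s < T"
        using s \<sigma>(2)[of N] by linarith
      have "\<forall>\<^sub>F n in sequentially. f s \<le> f (\<sigma> n) + c s"
        using order_tendstoD(2)[OF \<sigma>(3) \<open>0 < s\<close>]
        by eventually_elim (simp add: almost_antimono[OF \<sigma>(1) _ \<open>s < T\<close>])
      then have "f s \<le> a + c s"
        by (rule tendsto_lowerbound[OF tendsto_add[OF lim tendsto_const]]) simp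
      then show "f s < a + e"
        using \<delta>[of s] s N \<sigma>(1)[of N] by force
    qed
    then show ?thesis
      using \<sigma>(1) by (force simp: eventually_at_right_field abs_less_iff intro!: exI[of _ "\<sigma> N"])
  qed
  then show ?thesis
    by (auto simp: tendsto_iff dist_real_def)
qed

lemma bounded_almost_antimono_has_limit_at_right:
  fixes f c :: "real \<Rightarrow> real"
  assumes "0 < T"
    and bounded: "\<And>s. 0 < s \<Longrightarrow> s < T \<Longrightarrow> \<bar>f s\<bar> \<le> B"
    and almost_antimono: "\<And>s t. 0 < s \<Longrightarrow> s < t \<Longrightarrow> t < T \<Longrightarrow> f t \<le> f s + c t"
    and "(c \<longlongrightarrow> 0) (at_right 0)"
  shows "\<exists>a. (f \<longlongrightarrow> a) (at_right 0)"
proof -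
  define \<tau> where "\<tau> n = T / 2 * inverse (real (Suc n))" for n
  have \<tau>: "0 < \<tau> n" "\<tau> n < T" for n
    using \<open>0 < T\<close> by (auto simp: \<tau>_def field_simps add_pos_nonneg)
  have "bounded (range (f \<circ> \<tau>))"
    using bounded \<tau> by (auto simp: bounded_iff intro!: exI[of _ B])
  then obtain a r where "strict_mono r" and "(f \<circ> \<tau> \<circ> r) \<longlonglongrightarrow> a"
    using bounded_imp_convergent_subsequence by blast
  moreover have "\<tau> \<longlonglongrightarrow> 0"
    unfolding \<tau>_def using tendsto_mult_right_zero[OF LIMSEQ_inverse_real_of_nat] .
  ultimately have "(f \<longlongrightarrow> a) (at_right 0)"
    using \<tau> LIMSEQ_subseq_LIMSEQ
    by (intro almost_antimono_tendsto_at_right[OF almost_antimono assms(4), where \<sigma> = "\<tau> \<circ> r"])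
      (auto simp: comp_def)
  then show ?thesis ..
qed

lemma modulus_nonneg: "modulus \<omega> \<Longrightarrow> 0 \<le> r \<Longrightarrow> 0 \<le> \<omega> r"
  unfolding modulus_def by blast

lemma modulus_mono: "modulus \<omega> \<Longrightarrow> 0 \<le> r \<Longrightarrow> r \<le> s \<Longrightarrow> \<omega> r \<le> \<omega> s"
  unfolding modulus_def by blast

lemma modulus_tendsto_0: "modulus \<omega> \<Longrightarrow> (\<omega> \<longlongrightarrow> 0) (at_right 0)"
  unfolding modulus_def by blast

lemma modulus_scaled_tendsto_0:
  assumes "modulus \<omega>" "0 \<le> m"
  shows "((\<lambda>h. m * \<omega> (h * m)) \<longlongrightarrow> 0) (at_right 0)"
proof (cases "m = 0")
  case False
  then have "filterlim ((*) m) (at_right 0) (at_right 0)"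
    using assms(2) filtermap_times_pos_at_right[of m 0] by (simp add: filterlim_def)
  from tendsto_mult_left_zero[OF filterlim_compose[OF modulus_tendsto_0[OF assms(1)] this], of m]
  show ?thesis
    by (simp add: mult.commute)
qed simp

section \<open>Superdifferentials and their normal slices\<close>

lemma closed_superdiff: "closed (superdiff u S x)"
proof -
  have "p \<in> superdiff u S x" if p_closure: "p \<in> closure (superdiff u S x)" for p
    unfolding superdiff_def
  proof (intro CollectI allI impI)
    fix e :: real
    assume "0 < e"
    then obtain p' where p': "p' \<in> superdiff u S x" "dist p' p < e / 2"
      using closure_approachableD[OF p_closure, of "e / 2"] by (auto simp: dist_commute)
    obtain d where "0 < d" and d: "\<forall>y\<in>S. 0 < norm (y - x) \<longrightarrow> norm (y - x) < d \<longrightarrow>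
        u y - u x - p' \<bullet> (y - x) \<le> e / 2 * norm (y - x)"
      using p'(1) half_gt_zero[OF \<open>0 < e\<close>] unfolding superdiff_def by blast
    have "u y - u x - p \<bullet> (y - x) \<le> e * norm (y - x)"
      if "y \<in> S" "0 < norm (y - x)" "norm (y - x) < d" for y
    proof -
      have "(p' - p) \<bullet> (y - x) \<le> e / 2 * norm (y - x)"
      proof -
        have "(p' - p) \<bullet> (y - x) \<le> norm (p' - p) * norm (y - x)"
          by (rule norm_cauchy_schwarz)
        also have "\<dots> \<le> e / 2 * norm (y - x)"
          using p'(2) by (intro mult_right_mono) (simp_all add: dist_norm)
        finally show ?thesis .
      qed
      moreover have "u y - u x - p' \<bullet> (y - x) \<le> e / 2 * norm (y - x)"
        using d that by blast
      ultimately show ?thesis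
        by (simp add: inner_diff_left)
    qed
    with \<open>0 < d\<close> show "\<exists>d>0. \<forall>y\<in>S. 0 < norm (y - x) \<longrightarrow> norm (y - x) < d \<longrightarrow>
        u y - u x - p \<bullet> (y - x) \<le> e * norm (y - x)"
      by blast
  qed
  then show ?thesis
    by (auto simp flip: closure_subset_eq)
qed

lemma is_max_Sup:
  fixes A :: "real set"
  assumes "closed A" "A \<noteq> {}" "bdd_above A"
  shows "is_max A (Sup A)"
  using assms by (simp add: is_max_def closed_contains_Sup cSup_upper)

lemma inner_tangential_plus_normal: "norm \<nu> = 1 \<Longrightarrow> (tangential \<nu> p + l *\<^sub>R \<nu>) \<bullet> \<nu> = l"
  by (simp add: tangential_def inner_add_left inner_diff_left dot_square_norm)

lemma tangential_plus_normal_component: "tangential \<nu> p + (p \<bullet> \<nu>) *\<^sub>R \<nu> = p"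
  by (simp add: tangential_def)

lemma is_max_normal_slices:
  fixes D :: "'a::euclidean_space set"
  assumes "closed D" "norm \<nu> = 1"
    and le: "\<And>q. q \<in> D \<Longrightarrow> q \<bullet> \<nu> \<le> \<Lambda>" and "q\<^sub>0 \<in> D" "q\<^sub>0 \<bullet> \<nu> = \<Lambda>"
  shows "\<forall>p\<in>D. \<exists>lp. is_max {l. tangential \<nu> p + l *\<^sub>R \<nu> \<in> D} lp"
    and "is_max {lp. \<exists>p\<in>D. is_max {l. tangential \<nu> p + l *\<^sub>R \<nu> \<in> D} lp} \<Lambda>"
proof -
  define slice where "slice p = {l. tangential \<nu> p + l *\<^sub>R \<nu> \<in> D}" for p
  have slice_le: "l \<le> \<Lambda>" if "l \<in> slice p" for p l
    using le[of "tangential \<nu> p + l *\<^sub>R \<nu>"] that inner_tangential_plus_normal[OF \<open>norm \<nu> = 1\<close>]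
    by (simp add: slice_def)
  have max_slice: "is_max (slice p) (Sup (slice p))" if "p \<in> D" for p
  proof (rule is_max_Sup)
    have "slice p = (\<lambda>l. tangential \<nu> p + l *\<^sub>R \<nu>) -` D"
      by (auto simp: slice_def)
    then show "closed (slice p)"
      using continuous_closed_vimage[OF \<open>closed D\<close>, of "\<lambda>l. tangential \<nu> p + l *\<^sub>R \<nu>"]
      by (simp add: continuous_intros)
    have "p \<bullet> \<nu> \<in> slice p"
      using that by (simp add: slice_def tangential_plus_normal_component)
    then show "slice p \<noteq> {}"
      by blast
    show "bdd_above (slice p)"
      using slice_le by (rule bdd_aboveI)
  qed
  then show "\<forall>p\<in>D. \<exists>lp. is_max {l. tangential \<nu> p + l *\<^sub>R \<nu> \<in> D} lp"
    unfolding slice_def by blast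
  have "\<Lambda> \<in> slice q\<^sub>0"
    using \<open>q\<^sub>0 \<in> D\<close> tangential_plus_normal_component[of \<nu> q\<^sub>0] \<open>q\<^sub>0 \<bullet> \<nu> = \<Lambda>\<close>
    by (simp add: slice_def)
  then have "is_max (slice q\<^sub>0) \<Lambda>"
    using slice_le by (simp add: is_max_def)
  moreover have "lp \<le> \<Lambda>" if "is_max (slice p) lp" for p lp
    using that slice_le unfolding is_max_def by blast
  ultimately show "is_max {lp. \<exists>p\<in>D. is_max {l. tangential \<nu> p + l *\<^sub>R \<nu> \<in> D} lp} \<Lambda>"
    using \<open>q\<^sub>0 \<in> D\<close> unfolding is_max_def slice_def by blast
qed

section \<open>Linear majorants of concave positively homogeneous functions\<close>

lemma convex_strict_hypograph:
  assumes "concave_on H d"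
  shows "convex {z. fst z \<in> H \<and> snd z < d (fst z)}"
proof (rule convexI)
  fix z1 z2 :: "'a \<times> real" and \<alpha> \<beta> :: real
  assume z: "z1 \<in> {z. fst z \<in> H \<and> snd z < d (fst z)}" "z2 \<in> {z. fst z \<in> H \<and> snd z < d (fst z)}"
    and "0 \<le> \<alpha>" "0 \<le> \<beta>" "\<alpha> + \<beta> = 1"
  have "\<alpha> * snd z1 + \<beta> * snd z2 < \<alpha> * d (fst z1) + \<beta> * d (fst z2)"
  proof (cases "\<alpha> = 0")
    case False
    then have "\<alpha> * snd z1 < \<alpha> * d (fst z1)"
      using z \<open>0 \<le> \<alpha>\<close> by simp
    moreover have "\<beta> * snd z2 \<le> \<beta> * d (fst z2)"
      using z \<open>0 \<le> \<beta>\<close> by (simp add: mult_left_mono)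
    ultimately show ?thesis
      by linarith
  qed (use z \<open>\<alpha> + \<beta> = 1\<close> in simp)
  also have "\<dots> \<le> d (\<alpha> *\<^sub>R fst z1 + \<beta> *\<^sub>R fst z2)"
    using assms z \<open>0 \<le> \<alpha>\<close> \<open>0 \<le> \<beta>\<close> \<open>\<alpha> + \<beta> = 1\<close> by (simp add: concave_on_iff)
  moreover have "\<alpha> *\<^sub>R fst z1 + \<beta> *\<^sub>R fst z2 \<in> H"
    using assms z \<open>0 \<le> \<alpha>\<close> \<open>0 \<le> \<beta>\<close> \<open>\<alpha> + \<beta> = 1\<close> by (simp add: concave_on_iff convexD)
  ultimately show "\<alpha> *\<^sub>R z1 + \<beta> *\<^sub>R z2 \<in> {z. fst z \<in> H \<and> snd z < d (fst z)}"
    by simp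
qed

lemma concave_on_supporting_hyperplane:
  fixes d :: "'a::euclidean_space \<Rightarrow> real"
  assumes "concave_on H d" "w\<^sub>0 \<in> H"
  obtains \<alpha> \<beta> b where "(\<alpha>, \<beta>) \<noteq> 0" "0 \<le> \<beta>"
    and "\<And>w. w \<in> H \<Longrightarrow> \<alpha> \<bullet> w + \<beta> * d w \<le> b" and "b \<le> \<alpha> \<bullet> w\<^sub>0 + \<beta> * d w\<^sub>0"
proof -
  let ?A = "{z. fst z \<in> H \<and> snd z < d (fst z)}"
  have "(w\<^sub>0, d w\<^sub>0 - 1) \<in> ?A" "?A \<inter> {(w\<^sub>0, d w\<^sub>0)} = {}"
    using \<open>w\<^sub>0 \<in> H\<close> by auto
  then obtain n b where "n \<noteq> 0" and sep: "\<forall>z\<in>?A. n \<bullet> z \<le> b" and "n \<bullet> (w\<^sub>0, d w\<^sub>0) \<ge> b"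
    using separating_hyperplane_sets[OF convex_strict_hypograph[OF assms(1)] convex_singleton]
    by blast
  obtain \<alpha> \<beta> where n: "n = (\<alpha>, \<beta>)"
    by fastforce
  have below: "\<alpha> \<bullet> w + \<beta> * t \<le> b" if "w \<in> H" "t < d w" for w t
    using sep that by (auto simp: n)
  have "0 \<le> \<beta>"
  proof (rule ccontr)
    assume "\<not> 0 \<le> \<beta>"
    define t where "t = min (d w\<^sub>0 - 1) ((b - \<alpha> \<bullet> w\<^sub>0) / \<beta> - 1)"
    have "\<beta> * ((b - \<alpha> \<bullet> w\<^sub>0) / \<beta> - 1) \<le> \<beta> * t"
      using \<open>\<not> 0 \<le> \<beta>\<close> by (intro mult_left_mono_neg) (simp_all add: t_def)
    moreover have "\<beta> * ((b - \<alpha> \<bullet> w\<^sub>0) / \<beta> - 1) = b - \<alpha> \<bullet> w\<^sub>0 - \<beta>"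
      using \<open>\<not> 0 \<le> \<beta>\<close> by (simp add: field_simps)
    moreover have "t < d w\<^sub>0"
      by (simp add: t_def)
    ultimately show False
      using below[OF \<open>w\<^sub>0 \<in> H\<close>] \<open>\<not> 0 \<le> \<beta>\<close> by fastforce
  qed
  have "\<alpha> \<bullet> w + \<beta> * d w \<le> b" if "w \<in> H" for w
  proof (rule field_le_epsilon)
    fix e :: real
    assume "0 < e"
    have "\<beta> * (e / (\<beta> + 1)) \<le> e"
      using \<open>0 \<le> \<beta>\<close> \<open>0 < e\<close> by (simp add: field_simps)
    with below[OF that, of "d w - e / (\<beta> + 1)"] \<open>0 \<le> \<beta>\<close> \<open>0 < e\<close> show "\<alpha> \<bullet> w + \<beta> * d w \<le> b + e"
      by (simp add: algebra_simps)
  qed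
  with that[of \<alpha> \<beta> b] \<open>n \<noteq> 0\<close> \<open>0 \<le> \<beta>\<close> \<open>n \<bullet> (w\<^sub>0, d w\<^sub>0) \<ge> b\<close> show thesis
    by (simp add: n)
qed

lemma pos_homogeneous_le_imp_nonpos:
  fixes P :: "'a::real_vector \<Rightarrow> real"
  assumes hom: "\<And>w s. w \<in> H \<Longrightarrow> 0 < s \<Longrightarrow> s *\<^sub>R w \<in> H \<and> P (s *\<^sub>R w) = s * P w"
    and le: "\<And>w. w \<in> H \<Longrightarrow> P w \<le> b" and "w \<in> H"
  shows "P w \<le> 0"
proof (rule ccontr)
  assume "\<not> P w \<le> 0"
  define s where "s = (\<bar>b\<bar> + 1) / P w"
  have "0 < s"
    using \<open>\<not> P w \<le> 0\<close> by (simp add: s_def)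
  then have "P (s *\<^sub>R w) = \<bar>b\<bar> + 1"
    using hom[OF \<open>w \<in> H\<close>] \<open>\<not> P w \<le> 0\<close> by (simp add: s_def)
  with le[of "s *\<^sub>R w"] hom[OF \<open>w \<in> H\<close> \<open>0 < s\<close>] show False
    by linarith
qed

lemma inner_eq_0_if_nonpos_on_ball:
  assumes "0 < \<epsilon>" "\<And>w. w \<in> ball w\<^sub>0 \<epsilon> \<Longrightarrow> \<alpha> \<bullet> w \<le> 0" "\<alpha> \<bullet> w\<^sub>0 = 0"
  shows "\<alpha> = 0"
proof (rule ccontr)
  assume "\<alpha> \<noteq> 0"
  define s where "s = \<epsilon> / (2 * norm \<alpha>)"
  have "0 < s" "s * norm \<alpha> < \<epsilon>"
    using \<open>0 < \<epsilon>\<close> \<open>\<alpha> \<noteq> 0\<close> by (simp_all add: s_def)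
  then have "w\<^sub>0 + s *\<^sub>R \<alpha> \<in> ball w\<^sub>0 \<epsilon>"
    by (simp add: dist_norm)
  from assms(2)[OF this] assms(3) have "s * (\<alpha> \<bullet> \<alpha>) \<le> 0"
    by (simp add: inner_add_right)
  with \<open>0 < s\<close> \<open>\<alpha> \<noteq> 0\<close> show False
    by (simp add: mult_le_0_iff) (metis inner_gt_zero_iff not_le)
qed

text \<open>Homogeneity forces the supporting hyperplane through the origin, and openness of \<open>H\<close>
  rules out a vertical one.\<close>

lemma concave_pos_homogeneous_linear_majorant:
  fixes d :: "'a::euclidean_space \<Rightarrow> real"
  assumes "open H" "concave_on H d"
    and hom: "\<And>w s. w \<in> H \<Longrightarrow> 0 < s \<Longrightarrow> s *\<^sub>R w \<in> H \<and> d (s *\<^sub>R w) = s * d w"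
    and "w\<^sub>0 \<in> H"
  shows "\<exists>p. (\<forall>w\<in>H. d w \<le> p \<bullet> w) \<and> d w\<^sub>0 = p \<bullet> w\<^sub>0"
proof -
  obtain \<alpha> \<beta> b where "(\<alpha>, \<beta>) \<noteq> 0" "0 \<le> \<beta>"
    and P_le: "\<And>w. w \<in> H \<Longrightarrow> \<alpha> \<bullet> w + \<beta> * d w \<le> b" and "b \<le> \<alpha> \<bullet> w\<^sub>0 + \<beta> * d w\<^sub>0"
    using concave_on_supporting_hyperplane[OF assms(2,4)] by blast
  define P where "P w = \<alpha> \<bullet> w + \<beta> * d w" for w
  have "s *\<^sub>R w \<in> H \<and> P (s *\<^sub>R w) = s * P w" if "w \<in> H" "0 < s" for w s
    using hom[OF that] by (simp add: P_def algebra_simps)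
  note P_nonpos = pos_homogeneous_le_imp_nonpos[of H P, OF this P_le[folded P_def]]
  have "P w\<^sub>0 = 0"
    using P_le[of "(1/2) *\<^sub>R w\<^sub>0"] hom[of w\<^sub>0 "1/2"] P_nonpos[of w\<^sub>0] \<open>w\<^sub>0 \<in> H\<close>
      \<open>b \<le> \<alpha> \<bullet> w\<^sub>0 + \<beta> * d w\<^sub>0\<close>
    by (simp add: P_def algebra_simps)
  have "0 < \<beta>"
  proof (rule ccontr)
    assume "\<not> 0 < \<beta>"
    with \<open>0 \<le> \<beta>\<close> \<open>(\<alpha>, \<beta>) \<noteq> 0\<close> have "\<beta> = 0" "\<alpha> \<noteq> 0"
      by (auto simp: zero_prod_def)
    obtain \<epsilon> where "0 < \<epsilon>" "ball w\<^sub>0 \<epsilon> \<subseteq> H"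
      using \<open>open H\<close> \<open>w\<^sub>0 \<in> H\<close> open_contains_ball by blast
    with P_nonpos \<open>P w\<^sub>0 = 0\<close> \<open>\<beta> = 0\<close> have "\<alpha> = 0"
      by (intro inner_eq_0_if_nonpos_on_ball[of \<epsilon> w\<^sub>0]) (auto simp: P_def)
    with \<open>\<alpha> \<noteq> 0\<close> show False ..
  qed
  show ?thesis
  proof (intro exI[of _ "- (1 / \<beta>) *\<^sub>R \<alpha>"] conjI ballI)
    fix w
    assume "w \<in> H"
    with P_nonpos show "d w \<le> (- (1 / \<beta>) *\<^sub>R \<alpha>) \<bullet> w"
      using \<open>0 < \<beta>\<close> by (fastforce simp: P_def field_simps)
  next
    show "d w\<^sub>0 = (- (1 / \<beta>) *\<^sub>R \<alpha>) \<bullet> w\<^sub>0"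
      using \<open>P w\<^sub>0 = 0\<close> \<open>0 < \<beta>\<close> by (simp add: P_def field_simps)
  qed
qed

section \<open>Inward cones and defining functions\<close>

definition inward_cone :: "'a::real_inner \<Rightarrow> real \<Rightarrow> 'a set" where
  "inward_cone \<nu> \<eta> = {v. \<nu> \<bullet> v \<le> - \<eta> * norm v}"

lemma cone_inward_cone: "cone (inward_cone \<nu> \<eta>)"
  unfolding cone_def inward_cone_def
  by (auto simp: mult.left_commute[of _ \<eta>] dest: mult_left_mono)

lemma inward_cone_scaleR: "w \<in> inward_cone \<nu> \<eta> \<Longrightarrow> 0 \<le> c \<Longrightarrow> c *\<^sub>R w \<in> inward_cone \<nu> \<eta>"
  using cone_inward_cone unfolding cone_def by blast

lemma convex_inward_cone:
  assumes "0 \<le> \<eta>"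
  shows "convex (inward_cone \<nu> \<eta>)"
proof (rule convexI)
  fix v w :: 'a and a b :: real
  assume "v \<in> inward_cone \<nu> \<eta>" "w \<in> inward_cone \<nu> \<eta>" "0 \<le> a" "0 \<le> b"
  then have "\<nu> \<bullet> (a *\<^sub>R v + b *\<^sub>R w) \<le> a * (- \<eta> * norm v) + b * (- \<eta> * norm w)"
    unfolding inward_cone_def inner_add_right inner_scaleR_right
    by (intro add_mono mult_left_mono) auto
  also have "\<dots> = - \<eta> * (norm (a *\<^sub>R v) + norm (b *\<^sub>R w))"
    using \<open>0 \<le> a\<close> \<open>0 \<le> b\<close> by (simp add: algebra_simps)
  also have "\<dots> \<le> - \<eta> * norm (a *\<^sub>R v + b *\<^sub>R w)"
    using mult_left_mono[OF norm_triangle_ineq[of "a *\<^sub>R v" "b *\<^sub>R w"] assms] by simp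
  finally show "a *\<^sub>R v + b *\<^sub>R w \<in> inward_cone \<nu> \<eta>"
    by (simp add: inward_cone_def)
qed

lemma inward_cone_antimono: "\<eta>' \<le> \<eta> \<Longrightarrow> inward_cone \<nu> \<eta> \<subseteq> inward_cone \<nu> \<eta>'"
  unfolding inward_cone_def by (smt (verit) mem_Collect_eq mult_right_mono norm_ge_zero subsetI)

lemma in_inward_cone_if_inner_neg:
  assumes "\<nu> \<bullet> w < 0"
  obtains \<eta> where "0 < \<eta>" "w \<in> inward_cone \<nu> \<eta>"
proof
  have "w \<noteq> 0"
    using assms by auto
  then show "0 < - (\<nu> \<bullet> w) / norm w" "w \<in> inward_cone \<nu> (- (\<nu> \<bullet> w) / norm w)"
    using assms by (simp_all add: inward_cone_def divide_neg_pos)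
qed

lemma shifted_into_inward_cone:
  assumes "norm \<nu> = 1" "norm w = 1" "\<nu> \<bullet> w \<le> \<delta> / 2" "0 < \<delta>" "\<delta> \<le> 1 / 2"
  shows "w - \<delta> *\<^sub>R \<nu> \<in> inward_cone \<nu> (\<delta> / 4)" "\<nu> \<bullet> (w - \<delta> *\<^sub>R \<nu>) < 0"
    and "norm (w - \<delta> *\<^sub>R \<nu>) \<le> 3 / 2"
proof -
  have inner: "\<nu> \<bullet> (w - \<delta> *\<^sub>R \<nu>) \<le> - \<delta> / 2"
    using assms(1,3) by (simp add: inner_diff_right dot_square_norm)
  then show "\<nu> \<bullet> (w - \<delta> *\<^sub>R \<nu>) < 0"
    using \<open>0 < \<delta>\<close> by linarith
  have "norm (w - \<delta> *\<^sub>R \<nu>) \<le> norm w + norm (\<delta> *\<^sub>R \<nu>)"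
    by (rule norm_triangle_ineq4)
  then show norm: "norm (w - \<delta> *\<^sub>R \<nu>) \<le> 3 / 2"
    using assms by simp
  have "\<delta> / 4 * norm (w - \<delta> *\<^sub>R \<nu>) \<le> \<delta> / 4 * (3 / 2)"
    using norm \<open>0 < \<delta>\<close> by (intro mult_left_mono) auto
  with inner \<open>0 < \<delta>\<close> have "\<nu> \<bullet> (w - \<delta> *\<^sub>R \<nu>) \<le> - (\<delta> / 4) * norm (w - \<delta> *\<^sub>R \<nu>)"
    by linarith
  then show "w - \<delta> *\<^sub>R \<nu> \<in> inward_cone \<nu> (\<delta> / 4)"
    by (simp add: inward_cone_def)
qed

lemma defining_fn_interior_cone:
  assumes der: "(\<rho> has_derivative (\<lambda>v. (k *\<^sub>R \<nu>) \<bullet> v)) (at x)"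
    and "\<rho> x = 0" "0 < k" "0 < \<eta>"
  obtains r where "0 < r" "\<And>v. v \<in> inward_cone \<nu> \<eta> \<Longrightarrow> norm v < r \<Longrightarrow> v \<noteq> 0 \<Longrightarrow> \<rho> (x + v) < 0"
proof -
  have "0 < k * \<eta> / 2"
    using \<open>0 < k\<close> \<open>0 < \<eta>\<close> by simp
  then obtain r where "0 < r" and r: "\<forall>y. norm (y - x) < r \<longrightarrow>
      norm (\<rho> y - \<rho> x - (k *\<^sub>R \<nu>) \<bullet> (y - x)) \<le> k * \<eta> / 2 * norm (y - x)"
    using der unfolding has_derivative_at_alt by blast
  show thesis
  proof (rule that[OF \<open>0 < r\<close>])
    fix v
    assume "v \<in> inward_cone \<nu> \<eta>" "norm v < r" "v \<noteq> 0"
    have "\<bar>\<rho> (x + v) - k * (\<nu> \<bullet> v)\<bar> \<le> k * \<eta> / 2 * norm v"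
      using r[rule_format, of "x + v"] \<open>norm v < r\<close> \<open>\<rho> x = 0\<close> by simp
    then have "\<rho> (x + v) \<le> k * (\<nu> \<bullet> v) + k * \<eta> / 2 * norm v"
      by arith
    also have "\<dots> \<le> k * (- \<eta> * norm v) + k * \<eta> / 2 * norm v"
      using \<open>v \<in> inward_cone \<nu> \<eta>\<close> \<open>0 < k\<close>
      by (intro add_right_mono mult_left_mono) (auto simp: inward_cone_def)
    also have "\<dots> < 0"
      using \<open>0 < k\<close> \<open>0 < \<eta>\<close> \<open>v \<noteq> 0\<close> by (simp add: algebra_simps)
    finally show "\<rho> (x + v) < 0" .
  qed
qed

lemma defining_fn_exterior_cone:
  assumes der: "(\<rho> has_derivative (\<lambda>v. (k *\<^sub>R \<nu>) \<bullet> v)) (at x)"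
    and "\<rho> x = 0" "0 < k" "0 < \<eta>"
  obtains r where "0 < r" "\<And>v. norm v < r \<Longrightarrow> \<rho> (x + v) \<le> 0 \<Longrightarrow> \<nu> \<bullet> v \<le> \<eta> * norm v"
proof -
  have "0 < k * \<eta>"
    using \<open>0 < k\<close> \<open>0 < \<eta>\<close> by simp
  then obtain r where "0 < r" and r: "\<forall>y. norm (y - x) < r \<longrightarrow>
      norm (\<rho> y - \<rho> x - (k *\<^sub>R \<nu>) \<bullet> (y - x)) \<le> k * \<eta> * norm (y - x)"
    using der unfolding has_derivative_at_alt by blast
  show thesis
  proof (rule that[OF \<open>0 < r\<close>])
    fix v
    assume "norm v < r" "\<rho> (x + v) \<le> 0"
    then have "k * (\<nu> \<bullet> v) \<le> k * (\<eta> * norm v)"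
      using r[rule_format, of "x + v"] \<open>\<rho> x = 0\<close> by (simp add: abs_le_iff)
    then show "\<nu> \<bullet> v \<le> \<eta> * norm v"
      using \<open>0 < k\<close> by simp
  qed
qed

lemma closure_subset_sublevel:
  assumes "open U" "continuous_on U \<rho>" "\<Omega> \<inter> U = {y\<in>U. \<rho> y < 0}"
  shows "closure \<Omega> \<inter> U \<subseteq> {y. \<rho> y \<le> (0::real)}"
proof -
  have "open (U \<inter> \<rho> -` {0<..})"
    using continuous_open_preimage[OF assms(2,1)] by simp
  moreover have "(U \<inter> \<rho> -` {0<..}) \<inter> \<Omega> = {}"
    using assms(3) by (force simp: set_eq_iff)
  ultimately have "(U \<inter> \<rho> -` {0<..}) \<inter> closure \<Omega> = {}"
    by (simp add: open_Int_closure_eq_empty)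
  then show ?thesis
    by (auto simp: not_less[symmetric])
qed

lemma outward_unit_normal_defining_fn:
  assumes "open \<Omega>" "x \<in> frontier \<Omega>" "outward_unit_normal \<Omega> x \<nu>"
  obtains U \<rho> k where "open U" "x \<in> U" "0 < k" "norm \<nu> = 1"
    and "(\<rho> has_derivative (\<lambda>v. (k *\<^sub>R \<nu>) \<bullet> v)) (at x)" "\<rho> x = 0"
    and "\<Omega> \<inter> U = {y\<in>U. \<rho> y < 0}" "closure \<Omega> \<inter> U \<subseteq> {y. \<rho> y \<le> 0}"
proof -
  obtain U \<rho> g where "local_C2_defining_fn \<Omega> x U \<rho> g"
    and \<nu>: "\<nu> = (1 / norm (g x)) *\<^sub>R g x"
    using assms(3) unfolding outward_unit_normal_def by blast
  then have "open U" "x \<in> U" and der: "\<forall>y\<in>U. (\<rho> has_derivative (\<lambda>h. g y \<bullet> h)) (at y)"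
    and "g x \<noteq> 0" and \<Omega>U: "\<Omega> \<inter> U = {y\<in>U. \<rho> y < 0}"
    unfolding local_C2_defining_fn_def by blast+
  define k where "k = norm (g x)"
  have "0 < k" "g x = k *\<^sub>R \<nu>" "norm \<nu> = 1"
    using \<open>g x \<noteq> 0\<close> by (simp_all add: k_def \<nu>)
  have "continuous_on U \<rho>"
    using der by (intro has_derivative_continuous_on[where f' = "\<lambda>y h. g y \<bullet> h"])
      (simp add: has_derivative_at_withinI)
  then have closure_le: "closure \<Omega> \<inter> U \<subseteq> {y. \<rho> y \<le> 0}"
    using closure_subset_sublevel[OF \<open>open U\<close> _ \<Omega>U] by blast
  have "x \<in> closure \<Omega>" "x \<notin> \<Omega>"
    using assms(1,2) by (auto simp: frontier_def interior_open)
  then have "\<rho> x = 0"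
    using closure_le \<Omega>U \<open>x \<in> U\<close> by force
  show thesis
    using that[OF \<open>open U\<close> \<open>x \<in> U\<close> \<open>0 < k\<close> \<open>norm \<nu> = 1\<close> _ \<open>\<rho> x = 0\<close> \<Omega>U closure_le]
      der \<open>x \<in> U\<close> \<open>g x = k *\<^sub>R \<nu>\<close> by metis
qed

lemma outward_unit_normal_cones:
  assumes "open \<Omega>" "x \<in> frontier \<Omega>" "outward_unit_normal \<Omega> x \<nu>"
  shows "norm \<nu> = 1"
    and "0 < \<eta> \<Longrightarrow> \<exists>r>0. \<forall>v\<in>inward_cone \<nu> \<eta>. norm v < r \<longrightarrow> x + v \<in> closure \<Omega>"
    and "0 < \<eta> \<Longrightarrow> \<exists>r>0. \<forall>y\<in>closure \<Omega>. norm (y - x) < r \<longrightarrow> \<nu> \<bullet> (y - x) \<le> \<eta> * norm (y - x)"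
proof -
  obtain U \<rho> k where "open U" "x \<in> U" "0 < k" "norm \<nu> = 1"
    and der: "(\<rho> has_derivative (\<lambda>v. (k *\<^sub>R \<nu>) \<bullet> v)) (at x)" and "\<rho> x = 0"
    and \<Omega>U: "\<Omega> \<inter> U = {y\<in>U. \<rho> y < 0}" and closure_le: "closure \<Omega> \<inter> U \<subseteq> {y. \<rho> y \<le> 0}"
    by (rule outward_unit_normal_defining_fn[OF assms])
  then show "norm \<nu> = 1"
    by blast
  have "x \<in> closure \<Omega>"
    using assms(1,2) by (simp add: frontier_def interior_open)
  obtain r\<^sub>U where "0 < r\<^sub>U" and r\<^sub>U: "\<And>v. norm v < r\<^sub>U \<Longrightarrow> x + v \<in> U"
    using \<open>open U\<close> \<open>x \<in> U\<close> by (force simp: open_dist dist_norm)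
  show "\<exists>r>0. \<forall>v\<in>inward_cone \<nu> \<eta>. norm v < r \<longrightarrow> x + v \<in> closure \<Omega>" if "0 < \<eta>" for \<eta>
  proof -
    obtain r where "0 < r" and r: "\<And>v. v \<in> inward_cone \<nu> \<eta> \<Longrightarrow> norm v < r \<Longrightarrow> v \<noteq> 0 \<Longrightarrow> \<rho> (x + v) < 0"
      using defining_fn_interior_cone[OF der \<open>\<rho> x = 0\<close> \<open>0 < k\<close> \<open>0 < \<eta>\<close>] by blast
    have "x + v \<in> closure \<Omega>" if "v \<in> inward_cone \<nu> \<eta>" "norm v < min r r\<^sub>U" for v
      using r[OF that(1)] r\<^sub>U \<Omega>U that(2) \<open>x \<in> closure \<Omega>\<close> closure_subset by (cases "v = 0") auto
    then show ?thesis
      using \<open>0 < r\<close> \<open>0 < r\<^sub>U\<close> by (intro exI[of _ "min r r\<^sub>U"]) auto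
  qed
  show "\<exists>r>0. \<forall>y\<in>closure \<Omega>. norm (y - x) < r \<longrightarrow> \<nu> \<bullet> (y - x) \<le> \<eta> * norm (y - x)" if "0 < \<eta>" for \<eta>
  proof -
    obtain r where "0 < r" and r: "\<And>v. norm v < r \<Longrightarrow> \<rho> (x + v) \<le> 0 \<Longrightarrow> \<nu> \<bullet> v \<le> \<eta> * norm v"
      using defining_fn_exterior_cone[OF der \<open>\<rho> x = 0\<close> \<open>0 < k\<close> \<open>0 < \<eta>\<close>] by blast
    have "\<nu> \<bullet> (y - x) \<le> \<eta> * norm (y - x)"
      if "y \<in> closure \<Omega>" "norm (y - x) < min r r\<^sub>U" for y
      using r[of "y - x"] r\<^sub>U[of "y - x"] closure_le that by auto
    then show ?thesis
      using \<open>0 < r\<close> \<open>0 < r\<^sub>U\<close> by (intro exI[of _ "min r r\<^sub>U"]) auto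
  qed
qed

section \<open>Directional derivatives at a boundary point\<close>

locale semiconcave_at_boundary =
  fixes S :: "'a::euclidean_space set" and x \<nu> :: 'a
    and u :: "'a \<Rightarrow> real" and L :: real and \<omega> :: "real \<Rightarrow> real"
  assumes x_in_S: "x \<in> S" and unit_normal: "norm \<nu> = 1"
    and interior_cone: "\<And>\<eta>. 0 < \<eta> \<Longrightarrow> \<exists>r>0. \<forall>v\<in>inward_cone \<nu> \<eta>. norm v < r \<longrightarrow> x + v \<in> S"
    and exterior_cone: "\<And>\<eta>. 0 < \<eta> \<Longrightarrow>
      \<exists>r>0. \<forall>y\<in>S. norm (y - x) < r \<longrightarrow> \<nu> \<bullet> (y - x) \<le> \<eta> * norm (y - x)"
    and lipschitz_u: "L-lipschitz_on S u"
    and modulus_\<omega>: "modulus \<omega>"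
    and semiconcave_u: "semiconcave_with_modulus u \<omega> S"
begin

definition diff_quot :: "real \<Rightarrow> 'a \<Rightarrow> real" where
  "diff_quot h w = (u (x + h *\<^sub>R w) - u x) / h"

text \<open>The limit exists for inward directions (\<open>dir_deriv_tendsto\<close>); for other \<open>w\<close>,
  \<^const>\<open>Lim\<close> returns an unspecified value.\<close>

definition dir_deriv :: "'a \<Rightarrow> real" where
  "dir_deriv w = Lim (at_right 0) (\<lambda>h. diff_quot h w)"

definition cone_radius :: "real \<Rightarrow> real \<Rightarrow> bool" where
  "cone_radius \<eta> r \<longleftrightarrow> 0 < r \<and> (\<forall>v\<in>inward_cone \<nu> \<eta>. norm v < r \<longrightarrow> x + v \<in> S)"

lemma exists_cone_radius: "0 < \<eta> \<Longrightarrow> \<exists>r. cone_radius \<eta> r"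
  using interior_cone by (auto simp: cone_radius_def)

lemma cone_radiusD:
  assumes "cone_radius \<eta> r" "w \<in> inward_cone \<nu> \<eta>" "0 \<le> t" "t * norm w < r"
  shows "x + t *\<^sub>R w \<in> S"
  using assms inward_cone_scaleR[OF assms(2,3)] by (simp add: cone_radius_def)

lemma segment_subset_if_cone_radius:
  assumes "cone_radius \<eta> r" "0 \<le> \<eta>"
    and "a \<in> inward_cone \<nu> \<eta>" "norm a < r" "b \<in> inward_cone \<nu> \<eta>" "norm b < r"
  shows "closed_segment (x + a) (x + b) \<subseteq> S"
proof -
  have seg: "closed_segment a b \<subseteq> inward_cone \<nu> \<eta> \<inter> ball 0 r"
    using assms by (intro closed_segment_subset convex_Int convex_inward_cone convex_ball) auto
  have "x + v \<in> S" if "v \<in> closed_segment a b" for v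
    using subsetD[OF seg that] assms(1) by (simp add: cone_radius_def)
  then show ?thesis
    by (auto simp: closed_segment_translation)
qed

lemma eventually_segment_in_S:
  assumes "\<nu> \<bullet> a < 0" "\<nu> \<bullet> b < 0"
  shows "\<forall>\<^sub>F h in at_right 0. closed_segment (x + h *\<^sub>R a) (x + h *\<^sub>R b) \<subseteq> S"
proof -
  obtain \<eta>\<^sub>a \<eta>\<^sub>b where "0 < \<eta>\<^sub>a" "a \<in> inward_cone \<nu> \<eta>\<^sub>a" "0 < \<eta>\<^sub>b" "b \<in> inward_cone \<nu> \<eta>\<^sub>b"
    using in_inward_cone_if_inner_neg assms by metis
  define \<eta> where "\<eta> = min \<eta>\<^sub>a \<eta>\<^sub>b"
  have "0 < \<eta>"
    by (simp add: \<eta>_def \<open>0 < \<eta>\<^sub>a\<close> \<open>0 < \<eta>\<^sub>b\<close>)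
  have "a \<in> inward_cone \<nu> \<eta>" "b \<in> inward_cone \<nu> \<eta>"
    using \<open>a \<in> inward_cone \<nu> \<eta>\<^sub>a\<close> \<open>b \<in> inward_cone \<nu> \<eta>\<^sub>b\<close>
      inward_cone_antimono[of \<eta> \<eta>\<^sub>a \<nu>] inward_cone_antimono[of \<eta> \<eta>\<^sub>b \<nu>]
    by (auto simp: \<eta>_def)
  obtain r where r: "cone_radius \<eta> r"
    using exists_cone_radius[OF \<open>0 < \<eta>\<close>] by blast
  have "\<forall>\<^sub>F h in at_right 0. h * norm c < r" for c :: 'a
    using r by (intro order_tendstoD(2)[of _ 0]) (auto intro!: tendsto_eq_intros simp: cone_radius_def)
  then have "\<forall>\<^sub>F h in at_right 0. 0 < h \<and> h * norm a < r \<and> h * norm b < r"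
    using eventually_at_right_less by (intro eventually_conj) auto
  then show ?thesis
  proof eventually_elim
    case (elim h)
    then show ?case
      using segment_subset_if_cone_radius[OF r] \<open>0 < \<eta>\<close>
        inward_cone_scaleR[OF \<open>a \<in> inward_cone \<nu> \<eta>\<close>] inward_cone_scaleR[OF \<open>b \<in> inward_cone \<nu> \<eta>\<close>]
      by simp
  qed
qed

lemma eventually_ray_in_S: "\<nu> \<bullet> w < 0 \<Longrightarrow> \<forall>\<^sub>F h in at_right 0. x + h *\<^sub>R w \<in> S"
  using eventually_segment_in_S[of w w] by simp

lemma diff_quot_zero [simp]: "diff_quot h 0 = 0"
  by (simp add: diff_quot_def)

lemma diff_quot_lipschitz:
  assumes "x + h *\<^sub>R w \<in> S" "x + h *\<^sub>R w' \<in> S" "0 < h"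
  shows "\<bar>diff_quot h w - diff_quot h w'\<bar> \<le> L * norm (w - w')"
proof -
  have "\<bar>u (x + h *\<^sub>R w) - u (x + h *\<^sub>R w')\<bar> \<le> L * norm (h *\<^sub>R (w - w'))"
    using lipschitz_onD[OF lipschitz_u assms(1,2)] by (simp add: dist_norm dist_real_def algebra_simps)
  also have "\<dots> = h * (L * norm (w - w'))"
    using \<open>0 < h\<close> by simp
  finally show ?thesis
    using \<open>0 < h\<close> by (simp add: diff_quot_def diff_divide_distrib[symmetric] divide_le_eq mult.commute)
qed

lemma diff_quot_bound: "x + h *\<^sub>R w \<in> S \<Longrightarrow> 0 < h \<Longrightarrow> \<bar>diff_quot h w\<bar> \<le> L * norm w"
  using diff_quot_lipschitz[of h w 0] x_in_S by simp

lemma diff_quot_semiconcave: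
  assumes "closed_segment (x + h *\<^sub>R a) (x + h *\<^sub>R b) \<subseteq> S" "0 < h" "0 \<le> l" "l \<le> 1"
  shows "l * diff_quot h a + (1 - l) * diff_quot h b - diff_quot h (l *\<^sub>R a + (1 - l) *\<^sub>R b)
    \<le> l * (1 - l) * norm (a - b) * \<omega> (h * norm (a - b))"
proof -
  define c where "c = l *\<^sub>R a + (1 - l) *\<^sub>R b"
  have "l *\<^sub>R (x + h *\<^sub>R a) + (1 - l) *\<^sub>R (x + h *\<^sub>R b) = x + h *\<^sub>R c"
    by (simp add: c_def algebra_simps)
  moreover have "norm (x + h *\<^sub>R a - (x + h *\<^sub>R b)) = h * norm (a - b)"
    using \<open>0 < h\<close> by (simp flip: scaleR_diff_right)
  ultimately have "l * u (x + h *\<^sub>R a) + (1 - l) * u (x + h *\<^sub>R b) - u (x + h *\<^sub>R c)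
      \<le> l * (1 - l) * (h * norm (a - b)) * \<omega> (h * norm (a - b))"
    using semiconcave_u assms(1,3,4) unfolding semiconcave_with_modulus_def by metis
  then have "(l * u (x + h *\<^sub>R a) + (1 - l) * u (x + h *\<^sub>R b) - u (x + h *\<^sub>R c)) / h
      \<le> l * (1 - l) * (h * norm (a - b)) * \<omega> (h * norm (a - b)) / h"
    using \<open>0 < h\<close> by (intro divide_right_mono) auto
  also have "\<dots> = l * (1 - l) * norm (a - b) * \<omega> (h * norm (a - b))"
    using \<open>0 < h\<close> by simp
  finally have "(l * u (x + h *\<^sub>R a) + (1 - l) * u (x + h *\<^sub>R b) - u (x + h *\<^sub>R c)) / h
      \<le> l * (1 - l) * norm (a - b) * \<omega> (h * norm (a - b))" .
  moreover have "l * diff_quot h a + (1 - l) * diff_quot h b - diff_quot h c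
      = (l * u (x + h *\<^sub>R a) + (1 - l) * u (x + h *\<^sub>R b) - u (x + h *\<^sub>R c)) / h"
    by (simp add: diff_quot_def diff_divide_distrib add_divide_distrib algebra_simps)
  ultimately show ?thesis
    unfolding c_def by simp
qed

lemma diff_quot_almost_antimono:
  assumes "cone_radius \<eta> r" "0 \<le> \<eta>" "w \<in> inward_cone \<nu> \<eta>" "0 < s" "s < t" "t * norm w < r"
  shows "diff_quot t w \<le> diff_quot s w + norm w * \<omega> (t * norm w)"
proof -
  define l where "l = s / t"
  have "0 < l" "l < 1"
    using assms(4,5) by (simp_all add: l_def)
  have "t *\<^sub>R w \<in> inward_cone \<nu> \<eta>" "0 \<in> inward_cone \<nu> \<eta>"
    using inward_cone_scaleR[OF assms(3)] assms(4,5) by (simp_all add: inward_cone_def)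
  moreover have "norm (t *\<^sub>R w) < r" "norm 0 < r"
    using assms(1,4,5,6) by (simp_all add: cone_radius_def)
  ultimately have "closed_segment (x + t *\<^sub>R w) (x + 0) \<subseteq> S"
    using segment_subset_if_cone_radius[OF assms(1,2)] by blast
  then have "closed_segment (x + t *\<^sub>R w) (x + t *\<^sub>R 0) \<subseteq> S"
    by simp
  from diff_quot_semiconcave[OF this, of l] \<open>0 < l\<close> \<open>l < 1\<close> assms(4,5)
  have "l * diff_quot t w - diff_quot t (l *\<^sub>R w) \<le> l * (1 - l) * norm w * \<omega> (t * norm w)"
    by simp
  moreover have "diff_quot t (l *\<^sub>R w) = l * diff_quot s w"
    using assms(4,5) by (simp add: diff_quot_def l_def)
  ultimately have "l * (diff_quot t w - diff_quot s w) \<le> l * ((1 - l) * (norm w * \<omega> (t * norm w)))"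
    by (simp add: algebra_simps)
  then have "diff_quot t w - diff_quot s w \<le> (1 - l) * (norm w * \<omega> (t * norm w))"
    using \<open>0 < l\<close> by simp
  moreover have "(1 - l) * (norm w * \<omega> (t * norm w)) \<le> norm w * \<omega> (t * norm w)"
    using \<open>0 < l\<close> \<open>l < 1\<close> modulus_nonneg[OF modulus_\<omega>, of "t * norm w"] assms(4,5)
    by (intro mult_left_le_one_le) auto
  ultimately show ?thesis
    by simp
qed

lemma dir_deriv_tendsto:
  assumes "\<nu> \<bullet> w < 0"
  shows "((\<lambda>h. diff_quot h w) \<longlongrightarrow> dir_deriv w) (at_right 0)"
proof -
  obtain \<eta> where "0 < \<eta>" "w \<in> inward_cone \<nu> \<eta>"
    using in_inward_cone_if_inner_neg[OF assms] by blast
  obtain r where r: "cone_radius \<eta> r"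
    using exists_cone_radius[OF \<open>0 < \<eta>\<close>] by blast
  define T where "T = r / (norm w + 1)"
  have small: "t * norm w < r" if "0 < t" "t < T" for t
  proof -
    have "t * norm w \<le> t * (norm w + 1)"
      using that by simp
    also have "\<dots> < r"
      using that pos_less_divide_eq[of "norm w + 1" t r] norm_ge_zero[of w] by (simp add: T_def)
    finally show ?thesis .
  qed
  have "\<exists>a. ((\<lambda>h. diff_quot h w) \<longlongrightarrow> a) (at_right 0)"
  proof (rule bounded_almost_antimono_has_limit_at_right)
    show "0 < T"
      using r by (auto simp: T_def cone_radius_def intro!: divide_pos_pos add_nonneg_pos)
    show "\<bar>diff_quot s w\<bar> \<le> L * norm w" if "0 < s" "s < T" for s
      using diff_quot_bound cone_radiusD[OF r \<open>w \<in> inward_cone \<nu> \<eta>\<close>] small that by simp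
    show "diff_quot t w \<le> diff_quot s w + norm w * \<omega> (t * norm w)" if "0 < s" "s < t" "t < T" for s t
      using diff_quot_almost_antimono[OF r _ \<open>w \<in> inward_cone \<nu> \<eta>\<close>] small \<open>0 < \<eta>\<close> that by simp
    show "((\<lambda>t. norm w * \<omega> (t * norm w)) \<longlongrightarrow> 0) (at_right 0)"
      using modulus_scaled_tendsto_0[OF modulus_\<omega>] by simp
  qed
  then show ?thesis
    unfolding dir_deriv_def using tendsto_Lim[OF trivial_limit_at_right_real] by blast
qed

lemma diff_quot_le_dir_deriv:
  assumes "cone_radius \<eta> r" "0 \<le> \<eta>" "w \<in> inward_cone \<nu> \<eta>" "\<nu> \<bullet> w < 0" "0 < t" "t * norm w < r"
  shows "diff_quot t w \<le> dir_deriv w + norm w * \<omega> (t * norm w)"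
proof -
  have "\<forall>\<^sub>F s in at_right 0. diff_quot t w - norm w * \<omega> (t * norm w) \<le> diff_quot s w"
    unfolding eventually_at_right_field
    using diff_quot_almost_antimono[OF assms(1-3) _ _ assms(6)] \<open>0 < t\<close>
    by (intro exI[of _ t]) force
  from tendsto_lowerbound[OF dir_deriv_tendsto[OF assms(4)] this] show ?thesis
    by simp
qed

lemma dir_deriv_le_superdiff:
  assumes "p \<in> superdiff u S x" "\<nu> \<bullet> w < 0"
  shows "dir_deriv w \<le> p \<bullet> w"
proof (rule field_le_epsilon)
  fix e :: real
  assume "0 < e"
  have "0 < norm w"
    using assms(2) by auto
  then have "0 < e / norm w"
    using \<open>0 < e\<close> by simp
  then obtain \<delta> where "0 < \<delta>" and \<delta>: "\<forall>y\<in>S. 0 < norm (y - x) \<longrightarrow> norm (y - x) < \<delta> \<longrightarrow>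
      u y - u x - p \<bullet> (y - x) \<le> e / norm w * norm (y - x)"
    using assms(1) unfolding superdiff_def by blast
  have "\<forall>\<^sub>F h in at_right 0. h * norm w < \<delta>"
    using \<open>0 < \<delta>\<close> by (intro order_tendstoD(2)[of _ 0]) (auto intro!: tendsto_eq_intros)
  with eventually_ray_in_S[OF assms(2)] eventually_at_right_less
  have "\<forall>\<^sub>F h in at_right 0. diff_quot h w \<le> p \<bullet> w + e"
  proof eventually_elim
    case (elim h)
    then have "u (x + h *\<^sub>R w) - u x - h * (p \<bullet> w) \<le> e / norm w * (h * norm w)"
      using \<delta> \<open>0 < norm w\<close> by auto
    then show ?case
      using \<open>0 < h\<close> \<open>0 < norm w\<close> by (simp add: diff_quot_def pos_divide_le_eq algebra_simps)
  qed
  with dir_deriv_tendsto[OF assms(2)] show "dir_deriv w \<le> p \<bullet> w + e"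
    by (rule tendsto_upperbound) simp
qed

lemma concave_on_dir_deriv: "concave_on {w. \<nu> \<bullet> w < 0} dir_deriv"
  unfolding concave_on_iff
proof (intro conjI ballI allI impI convex_halfspace_lt)
  fix a b :: 'a and \<alpha> \<beta> :: real
  assume "a \<in> {w. \<nu> \<bullet> w < 0}" "b \<in> {w. \<nu> \<bullet> w < 0}" "0 \<le> \<alpha>" "0 \<le> \<beta>" "\<alpha> + \<beta> = 1"
  then have a: "\<nu> \<bullet> a < 0" and b: "\<nu> \<bullet> b < 0" and \<beta>: "\<beta> = 1 - \<alpha>"
    by auto
  then have c: "\<nu> \<bullet> (\<alpha> *\<^sub>R a + \<beta> *\<^sub>R b) < 0"
    using convex_halfspace_lt[of \<nu> 0] \<open>0 \<le> \<alpha>\<close> \<open>0 \<le> \<beta>\<close> \<open>\<alpha> + \<beta> = 1\<close> by (auto dest: convexD)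
  have "\<forall>\<^sub>F h in at_right 0.
      \<alpha> * diff_quot h a + \<beta> * diff_quot h b - diff_quot h (\<alpha> *\<^sub>R a + \<beta> *\<^sub>R b)
        \<le> norm (a - b) * \<omega> (h * norm (a - b))"
    using eventually_segment_in_S[OF a b] eventually_at_right_less
  proof eventually_elim
    case (elim h)
    have "\<alpha> * (1 - \<alpha>) * (norm (a - b) * \<omega> (h * norm (a - b))) \<le> norm (a - b) * \<omega> (h * norm (a - b))"
    proof (rule mult_left_le_one_le)
      show "0 \<le> \<alpha> * (1 - \<alpha>)" "\<alpha> * (1 - \<alpha>) \<le> 1"
        using \<open>0 \<le> \<alpha>\<close> \<open>0 \<le> \<beta>\<close> \<beta> by (auto intro: mult_le_one)
      show "0 \<le> norm (a - b) * \<omega> (h * norm (a - b))"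
        using modulus_nonneg[OF modulus_\<omega>] elim by simp
    qed
    with diff_quot_semiconcave[OF elim, of \<alpha>] \<open>0 \<le> \<alpha>\<close> \<open>0 \<le> \<beta>\<close> \<beta> show ?case
      by (simp add: mult.assoc)
  qed
  moreover have "((\<lambda>h. \<alpha> * diff_quot h a + \<beta> * diff_quot h b - diff_quot h (\<alpha> *\<^sub>R a + \<beta> *\<^sub>R b))
      \<longlongrightarrow> \<alpha> * dir_deriv a + \<beta> * dir_deriv b - dir_deriv (\<alpha> *\<^sub>R a + \<beta> *\<^sub>R b)) (at_right 0)"
    by (intro tendsto_intros dir_deriv_tendsto a b c)
  ultimately show "\<alpha> * dir_deriv a + \<beta> * dir_deriv b \<le> dir_deriv (\<alpha> *\<^sub>R a + \<beta> *\<^sub>R b)"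
    using tendsto_le[OF trivial_limit_at_right_real
        modulus_scaled_tendsto_0[OF modulus_\<omega>, of "norm (a - b)"]] by fastforce
qed

lemma dir_deriv_pos_homogeneous:
  assumes "\<nu> \<bullet> w < 0" "0 < s"
  shows "dir_deriv (s *\<^sub>R w) = s * dir_deriv w"
proof -
  have "filterlim ((*) s) (at_right 0) (at_right 0)"
    using \<open>0 < s\<close> filtermap_times_pos_at_right[of s 0] by (simp add: filterlim_def)
  from tendsto_mult_left[OF filterlim_compose[OF dir_deriv_tendsto[OF assms(1)] this], of s]
  have "((\<lambda>h. diff_quot h (s *\<^sub>R w)) \<longlongrightarrow> s * dir_deriv w) (at_right 0)"
    using \<open>0 < s\<close> by (simp add: diff_quot_def mult.commute)
  moreover have "\<nu> \<bullet> (s *\<^sub>R w) < 0"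
    using assms by (simp add: mult_pos_neg)
  ultimately show ?thesis
    using tendsto_unique[OF trivial_limit_at_right_real dir_deriv_tendsto] by blast
qed

lemma exists_linear_majorant_of_dir_deriv:
  "\<exists>p. (\<forall>w. \<nu> \<bullet> w < 0 \<longrightarrow> dir_deriv w \<le> p \<bullet> w) \<and> dir_deriv (- \<nu>) = p \<bullet> (- \<nu>)"
proof -
  have "\<nu> \<bullet> (- \<nu>) < 0"
    using unit_normal by (simp add: dot_square_norm)
  then show ?thesis
    using concave_pos_homogeneous_linear_majorant[OF open_halfspace_lt concave_on_dir_deriv, of "- \<nu>"]
      dir_deriv_pos_homogeneous by (simp add: mult_pos_neg)
qed

lemma diff_quot_shifted_le:
  assumes majorant: "\<And>w. \<nu> \<bullet> w < 0 \<Longrightarrow> dir_deriv w \<le> p \<bullet> w"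
    and "0 < \<delta>" "\<delta> \<le> 1 / 2" "cone_radius (\<delta> / 4) r"
    and "norm w = 1" "\<nu> \<bullet> w \<le> \<delta> / 2" "0 < h" "h < r / 2"
  shows "x + h *\<^sub>R (w - \<delta> *\<^sub>R \<nu>) \<in> S"
    and "diff_quot h (w - \<delta> *\<^sub>R \<nu>) \<le> p \<bullet> w + \<delta> * norm p + 2 * \<omega> (2 * h)"
proof -
  define w' where "w' = w - \<delta> *\<^sub>R \<nu>"
  note w' = shifted_into_inward_cone[OF unit_normal assms(5,6,2,3), folded w'_def]
  have "h * norm w' \<le> h * (3 / 2)"
    using w'(3) \<open>0 < h\<close> by (intro mult_left_mono) auto
  then have "h * norm w' < r"
    using \<open>0 < h\<close> \<open>h < r / 2\<close> by linarith
  then show "x + h *\<^sub>R (w - \<delta> *\<^sub>R \<nu>) \<in> S"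
    using cone_radiusD[OF assms(4) w'(1)] \<open>0 < h\<close> by (simp add: w'_def)
  have "diff_quot h w' \<le> dir_deriv w' + norm w' * \<omega> (h * norm w')"
    using diff_quot_le_dir_deriv[OF assms(4) _ w'(1,2) \<open>0 < h\<close> \<open>h * norm w' < r\<close>] \<open>0 < \<delta>\<close> by simp
  also have "\<dots> \<le> p \<bullet> w' + 2 * \<omega> (2 * h)"
  proof (rule add_mono[OF majorant[OF w'(2)]])
    have "\<omega> (h * norm w') \<le> \<omega> (2 * h)"
      using w'(3) \<open>0 < h\<close> by (intro modulus_mono[OF modulus_\<omega>]) auto
    then show "norm w' * \<omega> (h * norm w') \<le> 2 * \<omega> (2 * h)"
      using w'(3) \<open>0 < h\<close> modulus_nonneg[OF modulus_\<omega>, of "h * norm w'"]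
      by (intro mult_mono) auto
  qed
  also have "\<dots> \<le> p \<bullet> w + \<delta> * norm p + 2 * \<omega> (2 * h)"
  proof -
    have "- (p \<bullet> \<nu>) \<le> norm p"
      using Cauchy_Schwarz_ineq2[of p \<nu>] unit_normal by (simp add: abs_le_iff)
    then have "\<delta> * - (p \<bullet> \<nu>) \<le> \<delta> * norm p"
      using \<open>0 < \<delta>\<close> by (intro mult_left_mono) auto
    then show ?thesis
      by (simp add: w'_def inner_diff_right)
  qed
  finally show "diff_quot h (w - \<delta> *\<^sub>R \<nu>) \<le> p \<bullet> w + \<delta> * norm p + 2 * \<omega> (2 * h)"
    by (simp add: w'_def)
qed

lemma superdiff_defect_bound:
  assumes majorant: "\<And>w. \<nu> \<bullet> w < 0 \<Longrightarrow> dir_deriv w \<le> p \<bullet> w" and "0 < \<delta>" "\<delta> \<le> 1 / 2"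
  obtains r where "0 < r" "\<And>y. y \<in> S \<Longrightarrow> 0 < norm (y - x) \<Longrightarrow> norm (y - x) < r \<Longrightarrow>
    u y - u x - p \<bullet> (y - x) \<le> norm (y - x) * (\<delta> * (L + norm p) + 2 * \<omega> (2 * norm (y - x)))"
proof -
  obtain r\<^sub>1 where r\<^sub>1: "cone_radius (\<delta> / 4) r\<^sub>1"
    using exists_cone_radius[of "\<delta> / 4"] \<open>0 < \<delta>\<close> by auto
  obtain r\<^sub>2 where "0 < r\<^sub>2" and r\<^sub>2: "\<forall>y\<in>S. norm (y - x) < r\<^sub>2 \<longrightarrow> \<nu> \<bullet> (y - x) \<le> \<delta> / 2 * norm (y - x)"
    using exterior_cone \<open>0 < \<delta>\<close> by (meson half_gt_zero)
  show thesis
  proof (rule that)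
    show "0 < min r\<^sub>2 (r\<^sub>1 / 2)"
      using \<open>0 < r\<^sub>2\<close> r\<^sub>1 by (simp add: cone_radius_def)
  next
    fix y
    assume "y \<in> S" "0 < norm (y - x)" "norm (y - x) < min r\<^sub>2 (r\<^sub>1 / 2)"
    define h where "h = norm (y - x)"
    define w where "w = (1 / h) *\<^sub>R (y - x)"
    have "0 < h" "h < r\<^sub>2" "h < r\<^sub>1 / 2"
      using \<open>0 < norm (y - x)\<close> \<open>norm (y - x) < min r\<^sub>2 (r\<^sub>1 / 2)\<close> by (simp_all add: h_def)
    have y: "y = x + h *\<^sub>R w" "norm w = 1"
      using \<open>0 < h\<close> by (simp_all add: w_def h_def)
    have "\<nu> \<bullet> w \<le> \<delta> / 2"
      using r\<^sub>2 \<open>y \<in> S\<close> \<open>h < r\<^sub>2\<close> \<open>0 < h\<close> by (simp add: w_def h_def divide_le_eq mult.commute)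
    note shifted = diff_quot_shifted_le[OF majorant \<open>0 < \<delta>\<close> \<open>\<delta> \<le> 1 / 2\<close> r\<^sub>1 \<open>norm w = 1\<close> this
        \<open>0 < h\<close> \<open>h < r\<^sub>1 / 2\<close>]
    have "u y - u (x + h *\<^sub>R (w - \<delta> *\<^sub>R \<nu>)) \<le> L * (h * \<delta>)"
      using lipschitz_onD[OF lipschitz_u \<open>y \<in> S\<close> shifted(1)] unit_normal \<open>0 < h\<close> \<open>0 < \<delta>\<close>
      by (simp add: y(1) dist_norm dist_real_def algebra_simps)
    moreover have "u (x + h *\<^sub>R (w - \<delta> *\<^sub>R \<nu>)) - u x = h * diff_quot h (w - \<delta> *\<^sub>R \<nu>)"
      using \<open>0 < h\<close> by (simp add: diff_quot_def)
    moreover have "h * diff_quot h (w - \<delta> *\<^sub>R \<nu>) \<le> h * (p \<bullet> w + \<delta> * norm p + 2 * \<omega> (2 * h))"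
      using shifted(2) \<open>0 < h\<close> by simp
    moreover have "p \<bullet> (y - x) = h * (p \<bullet> w)"
      by (simp add: y(1))
    ultimately have "u y - u x - p \<bullet> (y - x) \<le> h * (\<delta> * (L + norm p) + 2 * \<omega> (2 * h))"
      by (simp add: algebra_simps)
    then show "u y - u x - p \<bullet> (y - x) \<le> norm (y - x) * (\<delta> * (L + norm p) + 2 * \<omega> (2 * norm (y - x)))"
      by (simp add: h_def)
  qed
qed

lemma superdiff_if_majorant:
  assumes majorant: "\<And>w. \<nu> \<bullet> w < 0 \<Longrightarrow> dir_deriv w \<le> p \<bullet> w"
  shows "p \<in> superdiff u S x"
  unfolding superdiff_def
proof (intro CollectI allI impI)
  fix e :: real
  assume "0 < e"
  have "0 \<le> L"
    using lipschitz_u lipschitz_on_nonneg by blast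
  define K where "K = L + norm p + 1"
  have "0 < K"
    using \<open>0 \<le> L\<close> by (simp add: K_def add_nonneg_pos)
  define \<delta> where "\<delta> = min (1 / 2) (e / (2 * K))"
  have "0 < \<delta>"
    using \<open>0 < e\<close> \<open>0 < K\<close> by (simp add: \<delta>_def)
  have "\<delta> \<le> 1 / 2"
    unfolding \<delta>_def by (rule min.cobounded1)
  have "\<delta> * (L + norm p) \<le> e / (2 * K) * K"
    using \<open>0 \<le> L\<close> \<open>0 < \<delta>\<close> by (intro mult_mono) (auto simp: \<delta>_def K_def)
  also have "\<dots> = e / 2"
    using \<open>0 < K\<close> by simp
  finally have \<delta>_small: "\<delta> * (L + norm p) \<le> e / 2" .
  obtain r where "0 < r" and r: "\<And>y. y \<in> S \<Longrightarrow> 0 < norm (y - x) \<Longrightarrow> norm (y - x) < r \<Longrightarrow>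
      u y - u x - p \<bullet> (y - x) \<le> norm (y - x) * (\<delta> * (L + norm p) + 2 * \<omega> (2 * norm (y - x)))"
    using superdiff_defect_bound[OF majorant \<open>0 < \<delta>\<close> \<open>\<delta> \<le> 1 / 2\<close>] by blast
  obtain r' where "0 < r'" and r': "\<And>t. 0 < t \<Longrightarrow> t < r' \<Longrightarrow> \<omega> t < e / 4"
    using order_tendstoD(2)[OF modulus_tendsto_0[OF modulus_\<omega>], of "e / 4"] \<open>0 < e\<close>
    by (auto simp: eventually_at_right_field)
  have "u y - u x - p \<bullet> (y - x) \<le> e * norm (y - x)"
    if "y \<in> S" "0 < norm (y - x)" "norm (y - x) < min r (r' / 2)" for y
  proof -
    have "2 * \<omega> (2 * norm (y - x)) \<le> e / 2"
      using r'[of "2 * norm (y - x)"] that by simp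
    with \<delta>_small have "\<delta> * (L + norm p) + 2 * \<omega> (2 * norm (y - x)) \<le> e"
      by simp
    with r[of y] that show ?thesis
      by (smt (verit) mult_left_mono norm_ge_zero mult.commute)
  qed
  then show "\<exists>d>0. \<forall>y\<in>S. 0 < norm (y - x) \<longrightarrow> norm (y - x) < d \<longrightarrow>
      u y - u x - p \<bullet> (y - x) \<le> e * norm (y - x)"
    using \<open>0 < r\<close> \<open>0 < r'\<close> by (intro exI[of _ "min r (r' / 2)"]) auto
qed

lemma one_sided_deriv_dir_deriv: "one_sided_deriv u S x (- \<nu>) (dir_deriv (- \<nu>))"
proof -
  let ?F = "at (0, - \<nu>) within {(h, \<theta>'). 0 < h \<and> x + h *\<^sub>R \<theta>' \<in> S}"
  have "\<nu> \<bullet> (- \<nu>) < 0"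
    using unit_normal by (simp add: dot_square_norm)
  have in_W: "\<forall>\<^sub>F z in ?F. 0 < fst z \<and> x + fst z *\<^sub>R snd z \<in> S"
    unfolding eventually_at_filter by (rule always_eventually) auto
  have "(fst \<longlongrightarrow> 0) ?F" "(snd \<longlongrightarrow> - \<nu>) ?F"
    using tendsto_fst[OF tendsto_ident_at] tendsto_snd[OF tendsto_ident_at] by auto
  then have fst_lim: "filterlim fst (at_right 0) ?F"
    using in_W by (auto simp: filterlim_at elim: eventually_mono)
  have ray: "\<forall>\<^sub>F z in ?F. x + fst z *\<^sub>R (- \<nu>) \<in> S"
    using eventually_compose_filterlim[OF eventually_ray_in_S[OF \<open>\<nu> \<bullet> (- \<nu>) < 0\<close>] fst_lim] .
  have "((\<lambda>z. diff_quot (fst z) (snd z) - diff_quot (fst z) (- \<nu>)) \<longlongrightarrow> 0) ?F"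
  proof (rule Lim_null_comparison)
    show "\<forall>\<^sub>F z in ?F. norm (diff_quot (fst z) (snd z) - diff_quot (fst z) (- \<nu>)) \<le> L * norm (snd z - - \<nu>)"
      using in_W ray
    proof eventually_elim
      case (elim z)
      then show ?case
        using diff_quot_lipschitz[of "fst z" "snd z" "- \<nu>"] by simp
    qed
    show "((\<lambda>z. L * norm (snd z - - \<nu>)) \<longlongrightarrow> 0) ?F"
      using \<open>(snd \<longlongrightarrow> - \<nu>) ?F\<close> by (intro tendsto_mult_right_zero tendsto_norm_zero LIM_zero)
  qed
  moreover have "((\<lambda>z. diff_quot (fst z) (- \<nu>)) \<longlongrightarrow> dir_deriv (- \<nu>)) ?F"
    using filterlim_compose[OF dir_deriv_tendsto[OF \<open>\<nu> \<bullet> (- \<nu>) < 0\<close>] fst_lim] .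
  ultimately have "((\<lambda>z. (diff_quot (fst z) (snd z) - diff_quot (fst z) (- \<nu>))
      + diff_quot (fst z) (- \<nu>)) \<longlongrightarrow> 0 + dir_deriv (- \<nu>)) ?F"
    by (rule tendsto_add)
  then have "((\<lambda>z. diff_quot (fst z) (snd z)) \<longlongrightarrow> dir_deriv (- \<nu>)) ?F"
    by simp
  then show ?thesis
    by (simp add: one_sided_deriv_def diff_quot_def case_prod_beta')
qed

lemma normal_component_superdiff_le: "q \<in> superdiff u S x \<Longrightarrow> q \<bullet> \<nu> \<le> - dir_deriv (- \<nu>)"
  using dir_deriv_le_superdiff[of q "- \<nu>"] unit_normal by (simp add: dot_square_norm)

lemma normal_component_superdiff_attained: "\<exists>q\<in>superdiff u S x. q \<bullet> \<nu> = - dir_deriv (- \<nu>)"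
  using exists_linear_majorant_of_dir_deriv superdiff_if_majorant by force

end

theorem proposition2p13:
  fixes \<Omega> :: "'a::euclidean_space set" and u :: "'a \<Rightarrow> real" and \<omega> :: "real \<Rightarrow> real"
    and x \<nu> :: 'a and L :: real
  assumes "bounded \<Omega>" and "open \<Omega>" and "C2_boundary \<Omega>"
    and "x \<in> frontier \<Omega>" and "outward_unit_normal \<Omega> x \<nu>"
    and "L-lipschitz_on (closure \<Omega>) u"
    and "modulus \<omega>" and "semiconcave_with_modulus u \<omega> (closure \<Omega>)"
  shows "(\<forall>p\<in>superdiff u (closure \<Omega>) x.
            \<exists>lp. is_max {l. tangential \<nu> p + l *\<^sub>R \<nu> \<in> superdiff u (closure \<Omega>) x} lp)
       \<and> (\<exists>\<Lambda>. is_max {lp. \<exists>p\<in>superdiff u (closure \<Omega>) x.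
                  is_max {l. tangential \<nu> p + l *\<^sub>R \<nu> \<in> superdiff u (closure \<Omega>) x} lp} \<Lambda>
              \<and> one_sided_deriv u (closure \<Omega>) x (- \<nu>) (- \<Lambda>))"
proof -
  have "x \<in> closure \<Omega>"
    using assms(2,4) by (simp add: frontier_def interior_open)
  interpret semiconcave_at_boundary "closure \<Omega>" x \<nu> u L \<omega>
    using outward_unit_normal_cones[OF assms(2,4,5)] \<open>x \<in> closure \<Omega>\<close> assms(6-8)
    by unfold_locales blast+
  obtain q where "q \<in> superdiff u (closure \<Omega>) x" "q \<bullet> \<nu> = - dir_deriv (- \<nu>)"
    using normal_component_superdiff_attained by blast
  note slices = is_max_normal_slices[OF closed_superdiff unit_normal normal_component_superdiff_le this]
  show ?thesis
    using slices one_sided_deriv_dir_deriv by (intro conjI exI[of _ "- dir_deriv (- \<nu>)"]) simp_all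
qed

end
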